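(* Let $\psi:[0,1]\to[0,1]$ be a convex, strictly increasing, surjective, three times differentiable function with $\psi'>0$ on $(0,1]$ such that $x\psi'(x)/\psi(x)$ and $x\psi''(x)/\psi'(x)$ are strictly increasing on $(0,1]$. Let $n\ge2$ and for $r\ge0$ let $\phi_*(r)=\min\{\|(y,r)\|_\psi:\ y\in\mathbb R_+^{n-1},\ \|y\|_\psi=1\}$. Then $\phi_*(r)=\|(1,r)\|_\psi$ for all $r\ge0$, where $(1,r)\in\mathbb R^2$.
   Context: For $\psi:[0,1]\to[0,1]$ a continuous strictly increasing bijection and $v\in\mathbb R^k$ (any $k$), $\|v\|_\psi$ is $0$ if $v=0$ and otherwise the unique $s>0$ with $\sum_{i=1}^k\psi(|v_i|/s)=1$. $(y,r)\in\mathbb R^n$ denotes $y$ with $r$ appended. *)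

theory Defs
  imports "HOL-Analysis.Analysis"
begin

text \<open>The psi-"norm" of a finite vector, represented as a list of reals (so that
vectors of different lengths, e.g. in R^(n-1), R^n and R^2, can be compared).\<close>

definition psi_norm :: "(real \<Rightarrow> real) \<Rightarrow> real list \<Rightarrow> real" where
  "psi_norm \<psi> v =
     (if (\<forall>x\<in>set v. x = 0) then 0
      else (THE s. s > 0 \<and> (\<forall>x\<in>set v. \<bar>x\<bar> / s \<le> 1) \<and>
                  (\<Sum>x\<leftarrow>v. \<psi> (\<bar>x\<bar> / s)) = 1))"

end

theory Submission
  imports Defs
begin

(* Structure of the development.
   1. The psi-norm of a nonzero vector v is the unique root s > 0 of the decreasing
      function  s |-> psi_sum v s = sum_i psi(|v_i|/s)  at level 1; this gives a
      comparison principle: psi_sum v s <= 1 at an admissible scale s forces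
      ||v||_psi <= s  (psi_norm_le_of_psi_sum_le).  Zero entries do not matter.
   2. Increasing elasticity makes psi(m y)/psi(m) decreasing in m, i.e. psi is
      supermultiplicative: psi(l) psi(z) <= psi(l z) on [0,1]  (psi_supermult).
   3. For ||y||_psi = 1 and t = ||(y,r)||_psi, comparison gives t >= 1, and
      supermultiplicativity gives psi(1/t) + psi(|r|/t) <= psi_sum (y,r) t = 1,
      so comparison again gives ||(1,r)||_psi <= t.  The value is attained by
      padding (1,r) with zeros.  Only continuity, convexity (through psi(z) <= z),
      monotonicity and the first elasticity condition are needed. *)

lemma sum_list_mono_strict_at:
  fixes f g :: "'a \<Rightarrow> real"
  assumes le: "\<And>x. x \<in> set xs \<Longrightarrow> f x \<le> g x"
    and x0: "x0 \<in> set xs" and less: "f x0 < g x0"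
  shows "(\<Sum>x\<leftarrow>xs. f x) < (\<Sum>x\<leftarrow>xs. g x)"
proof -
  have "(\<Sum>x\<leftarrow>remove1 x0 xs. f x) \<le> (\<Sum>x\<leftarrow>remove1 x0 xs. g x)"
    by (rule sum_list_mono) (meson le notin_set_remove1)
  then show ?thesis
    unfolding sum_list_map_remove1[OF x0, of f] sum_list_map_remove1[OF x0, of g]
    using less by linarith
qed

lemma continuous_on_sum_list:
  fixes f :: "'a \<Rightarrow> 'b::topological_space \<Rightarrow> 'c::topological_monoid_add"
  shows "(\<And>x. x \<in> set xs \<Longrightarrow> continuous_on S (f x)) \<Longrightarrow>
         continuous_on S (\<lambda>s. \<Sum>x\<leftarrow>xs. f x s)"
  by (induction xs) (auto intro: continuous_on_add)

definition psi_sum :: "(real \<Rightarrow> real) \<Rightarrow> real list \<Rightarrow> real \<Rightarrow> real" where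
  "psi_sum \<psi> v s = (\<Sum>x\<leftarrow>v. \<psi> (\<bar>x\<bar> / s))"

definition is_psi_norm :: "(real \<Rightarrow> real) \<Rightarrow> real list \<Rightarrow> real \<Rightarrow> bool" where
  "is_psi_norm \<psi> v s \<longleftrightarrow> s > 0 \<and> (\<forall>x\<in>set v. \<bar>x\<bar> / s \<le> 1) \<and> psi_sum \<psi> v s = 1"

lemma psi_norm_eq_The:
  "psi_norm \<psi> v = (if \<forall>x\<in>set v. x = 0 then 0 else THE s. is_psi_norm \<psi> v s)"
  by (simp add: psi_norm_def is_psi_norm_def psi_sum_def)

lemma psi_sum_append: "psi_sum \<psi> (u @ v) s = psi_sum \<psi> u s + psi_sum \<psi> v s"
  by (simp add: psi_sum_def)

lemma psi_norm_filter_nonzero: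
  assumes "\<psi> 0 = 0"
  shows "psi_norm \<psi> (filter (\<lambda>x. x \<noteq> 0) v) = psi_norm \<psi> v"
proof -
  have "psi_sum \<psi> (filter (\<lambda>x. x \<noteq> 0) v) s = psi_sum \<psi> v s" for s
    unfolding psi_sum_def using assms by (intro sum_list_map_filter) simp
  then have "is_psi_norm \<psi> (filter (\<lambda>x. x \<noteq> 0) v) = is_psi_norm \<psi> v"
    by (intro ext) (auto simp: is_psi_norm_def)
  then show ?thesis by (simp add: psi_norm_eq_The)
qed

locale gauge_function =
  fixes \<psi> :: "real \<Rightarrow> real"
  assumes cont: "continuous_on {0..1} \<psi>"
    and conv: "convex_on {0..1} \<psi>"
    and incr: "strict_mono_on {0..1} \<psi>"
    and surj: "\<psi> ` {0..1} = {0..1}"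
begin

lemma psi_mono: "0 \<le> a \<Longrightarrow> a \<le> b \<Longrightarrow> b \<le> 1 \<Longrightarrow> \<psi> a \<le> \<psi> b"
  by (intro strict_mono_on_leD[OF incr]) auto

lemma psi_strict_mono: "0 \<le> a \<Longrightarrow> a < b \<Longrightarrow> b \<le> 1 \<Longrightarrow> \<psi> a < \<psi> b"
  by (intro strict_mono_onD[OF incr]) auto

lemma psi_nonneg: "0 \<le> z \<Longrightarrow> z \<le> 1 \<Longrightarrow> 0 \<le> \<psi> z"
  using surj by auto

text \<open>An increasing bijection of [0,1] fixes the endpoints.\<close>

lemma psi_0: "\<psi> 0 = 0"
proof -
  obtain a where "a \<in> {0..1}" "\<psi> a = 0"
    using surj by (metis atLeastAtMost_iff imageE order_refl zero_le_one)
  then show ?thesis using psi_mono[of 0 a] psi_nonneg[of 0] by auto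
qed

lemma psi_1: "\<psi> 1 = 1"
proof -
  obtain a where "a \<in> {0..1}" "\<psi> a = 1"
    using surj by (metis atLeastAtMost_iff imageE order_refl zero_le_one)
  moreover have "\<psi> 1 \<le> 1" using surj by auto
  ultimately show ?thesis using psi_mono[of a 1] by auto
qed

lemma psi_pos: "0 < z \<Longrightarrow> z \<le> 1 \<Longrightarrow> 0 < \<psi> z"
  using psi_strict_mono[of 0 z] psi_0 by auto

text \<open>Convexity with \<open>\<psi> 0 = 0\<close>, \<open>\<psi> 1 = 1\<close> puts \<psi> below the diagonal.\<close>

lemma psi_le_id: "0 \<le> z \<Longrightarrow> z \<le> 1 \<Longrightarrow> \<psi> z \<le> z"
  using convex_onD[OF conv, of z 0 1] psi_0 psi_1 by auto

lemma psi_sum_strict_antimono: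
  assumes "0 < a" "a < b" "\<forall>x\<in>set v. \<bar>x\<bar> / a \<le> 1" "x0 \<in> set v" "x0 \<noteq> 0"
  shows "psi_sum \<psi> v b < psi_sum \<psi> v a"
  unfolding psi_sum_def
proof (rule sum_list_mono_strict_at[OF _ assms(4)])
  fix x assume "x \<in> set v"
  then show "\<psi> (\<bar>x\<bar> / b) \<le> \<psi> (\<bar>x\<bar> / a)"
    using assms by (intro psi_mono) (auto intro: divide_left_mono)
next
  show "\<psi> (\<bar>x0\<bar> / b) < \<psi> (\<bar>x0\<bar> / a)"
    using assms by (intro psi_strict_mono) (auto intro: divide_strict_left_mono)
qed

lemma is_psi_norm_unique:
  assumes "is_psi_norm \<psi> v a" "is_psi_norm \<psi> v b" "x0 \<in> set v" "x0 \<noteq> 0"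
  shows "a = b"
proof -
  have False if ab: "is_psi_norm \<psi> v a" "is_psi_norm \<psi> v b" "a < b" for a b
  proof -
    have "psi_sum \<psi> v b < psi_sum \<psi> v a"
      using ab assms(3,4) unfolding is_psi_norm_def by (intro psi_sum_strict_antimono) auto
    then show False using ab unfolding is_psi_norm_def by simp
  qed
  then show ?thesis using assms(1,2) by (metis linorder_neqE_linordered_idom)
qed

text \<open>Existence by the intermediate value theorem: at the scale \<open>M = max |v_i|\<close> the
  sum is at least 1, at the scale \<open>S = \<Sum> |v_i|\<close> it is at most 1 since \<open>\<psi> z \<le> z\<close>.\<close>

lemma is_psi_norm_exists:
  assumes "x0 \<in> set v" "x0 \<noteq> 0"
  shows "\<exists>s. is_psi_norm \<psi> v s"
proof -
  define M where "M = Max (abs ` set v)"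
  define S where "S = (\<Sum>x\<leftarrow>v. \<bar>x\<bar>)"
  have le_M: "\<bar>x\<bar> \<le> M" if "x \<in> set v" for x
    using that unfolding M_def by auto
  have "M \<in> abs ` set v"
    unfolding M_def using assms(1) by (intro Max_in) auto
  then obtain xm where xm: "xm \<in> set v" "\<bar>xm\<bar> = M" by auto
  have M_pos: "M > 0" using le_M[OF assms(1)] assms(2) by auto
  have M_le_S: "M \<le> S"
    unfolding S_def by (intro member_le_sum_list) (use xm in auto)
  have admissible: "\<forall>x\<in>set v. \<bar>x\<bar> / s \<le> 1" if "M \<le> s" for s
    using M_pos that order_trans[OF le_M that] by (auto simp: divide_le_eq_1)
  have "\<psi> (\<bar>xm\<bar> / M) \<le> psi_sum \<psi> v M"
    unfolding psi_sum_def
  proof (rule member_le_sum_list)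
    show "\<psi> (\<bar>xm\<bar> / M) \<in> set (map (\<lambda>x. \<psi> (\<bar>x\<bar> / M)) v)" unfolding set_map by (rule imageI[OF xm(1)])
  next
    fix u assume "u \<in> set (map (\<lambda>x. \<psi> (\<bar>x\<bar> / M)) v)"
    then show "0 \<le> u" using admissible[of M] M_pos by (auto intro!: psi_nonneg)
  qed
  then have at_M: "1 \<le> psi_sum \<psi> v M" using xm M_pos psi_1 by simp
  have "psi_sum \<psi> v S \<le> (\<Sum>x\<leftarrow>v. \<bar>x\<bar> * (1 / S))"
    unfolding psi_sum_def using admissible[OF M_le_S] M_pos M_le_S
    by (intro sum_list_mono) (auto intro!: psi_le_id)
  also have "\<dots> = S * (1 / S)"
    unfolding S_def by (rule sum_list_mult_const)
  also have "\<dots> = 1"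
    using M_pos M_le_S by simp
  finally have at_S: "psi_sum \<psi> v S \<le> 1" .
  have "continuous_on {M..S} (psi_sum \<psi> v)"
    unfolding psi_sum_def
  proof (intro continuous_on_sum_list continuous_on_compose2[OF cont])
    fix x assume "x \<in> set v"
    then show "(\<lambda>s. \<bar>x\<bar> / s) ` {M..S} \<subseteq> {0..1}" using admissible M_pos by fastforce
  qed (use M_pos in \<open>auto intro!: continuous_intros\<close>)
  then obtain s where "M \<le> s" "psi_sum \<psi> v s = 1"
    using IVT2'[OF at_S at_M M_le_S] by auto
  then have "is_psi_norm \<psi> v s" using M_pos admissible by (simp add: is_psi_norm_def)
  then show ?thesis ..
qed

lemma psi_norm_is_psi_norm:
  assumes "x0 \<in> set v" "x0 \<noteq> 0"
  shows "is_psi_norm \<psi> v (psi_norm \<psi> v)"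
proof -
  have "\<exists>!s. is_psi_norm \<psi> v s"
    using is_psi_norm_exists[OF assms] is_psi_norm_unique[OF _ _ assms] by blast
  then show ?thesis unfolding psi_norm_eq_The using assms by (auto intro: theI')
qed

lemma psi_norm_eqI:
  assumes "is_psi_norm \<psi> v s" "x0 \<in> set v" "x0 \<noteq> 0"
  shows "psi_norm \<psi> v = s"
  using is_psi_norm_unique[OF psi_norm_is_psi_norm assms(1)] assms(2,3) by blast

lemma psi_norm_le_of_psi_sum_le:
  assumes "x0 \<in> set v" "x0 \<noteq> 0" "0 < s" "\<forall>x\<in>set v. \<bar>x\<bar> / s \<le> 1" "psi_sum \<psi> v s \<le> 1"
  shows "psi_norm \<psi> v \<le> s"
proof (rule ccontr)
  assume "\<not> psi_norm \<psi> v \<le> s"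
  then have "psi_sum \<psi> v (psi_norm \<psi> v) < psi_sum \<psi> v s"
    using assms by (intro psi_sum_strict_antimono) auto
  then show False
    using psi_norm_is_psi_norm[OF assms(1,2)] assms(5) by (simp add: is_psi_norm_def)
qed

lemma psi_norm_unit_vector: "psi_norm \<psi> (1 # replicate k 0) = 1"
proof -
  have "psi_norm \<psi> [1] = 1"
    by (rule psi_norm_eqI[of _ _ 1]) (auto simp: is_psi_norm_def psi_sum_def psi_1)
  then show ?thesis
    using psi_norm_filter_nonzero[of \<psi>, OF psi_0, of "1 # replicate k 0"] by (simp add: filter_replicate)
qed

lemma psi_norm_pad_zeros: "psi_norm \<psi> (1 # replicate k 0 @ [r]) = psi_norm \<psi> [1, r]"
  using psi_norm_filter_nonzero[of \<psi>, OF psi_0, of "1 # replicate k 0 @ [r]"]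
    psi_norm_filter_nonzero[of \<psi>, OF psi_0, of "[1, r]"] by (simp add: filter_replicate)

end

locale elastic_gauge_function = gauge_function +
  fixes d1 :: "real \<Rightarrow> real"
  assumes psi_deriv: "\<And>x. x \<in> {0..1} \<Longrightarrow> (\<psi> has_real_derivative d1 x) (at x within {0..1})"
    and elasticity_mono: "mono_on {0<..1} (\<lambda>x. x * d1 x / \<psi> x)"
begin

lemma psi_deriv_interior: "0 < x \<Longrightarrow> x < 1 \<Longrightarrow> (\<psi> has_real_derivative d1 x) (at x)"
  using psi_deriv[of x] at_within_interior[of x "{0..1::real}"] by auto

text \<open>Increasing elasticity means exactly that \<open>m \<mapsto> \<psi>(m y) / \<psi>(m)\<close> has
  nonpositive derivative for a fixed factor \<open>y \<in> (0,1]\<close>.\<close>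

lemma psi_quotient_deriv_nonpos:
  assumes y: "0 < y" "y \<le> 1" and m: "0 < m" "m < 1"
  shows "\<exists>D. ((\<lambda>m. \<psi> (m * y) / \<psi> m) has_real_derivative D) (at m) \<and> D \<le> 0"
proof -
  have my: "0 < m * y" "m * y \<le> m" using y m by (auto simp: mult_le_cancel_left1)
  have pos: "\<psi> m > 0" "\<psi> (m * y) > 0" using psi_pos[of m] psi_pos[of "m * y"] my m by auto
  have D_my: "((\<lambda>m. \<psi> (m * y)) has_real_derivative d1 (m * y) * y) (at m)"
    using DERIV_chain2[OF psi_deriv_interior DERIV_cmult_Id[of y m]] my m
    by (simp add: mult.commute)
  have "(m * y) * d1 (m * y) / \<psi> (m * y) \<le> m * d1 m / \<psi> m"
    using mono_onD[OF elasticity_mono, of "m * y" m] my m by auto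
  then have "m * (d1 (m * y) * y * \<psi> m) \<le> m * (\<psi> (m * y) * d1 m)"
    using pos by (simp add: field_simps)
  then have num: "d1 (m * y) * y * \<psi> m - \<psi> (m * y) * d1 m \<le> 0"
    using m by (simp add: mult_le_cancel_left_pos)
  show ?thesis
    using DERIV_divide[OF D_my psi_deriv_interior[OF m]] pos num
    by (intro exI conjI) (auto intro: divide_nonpos_pos)
qed

text \<open>Supermultiplicativity of \<psi>: compare the quotient \<open>\<psi>(m y) / \<psi>(m)\<close> at m = l and m = 1.\<close>

lemma psi_supermult:
  assumes l: "0 < l" "l \<le> 1" and z: "0 \<le> z" "z \<le> 1"
  shows "\<psi> l * \<psi> z \<le> \<psi> (l * z)"
proof (cases "z = 0")
  case True
  then show ?thesis using psi_0 by simp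
next
  case False
  then have z_pos: "0 < z" using z by simp
  have "\<psi> (1 * z) / \<psi> 1 \<le> \<psi> (l * z) / \<psi> l"
  proof (rule DERIV_nonpos_imp_decreasing_open[OF l(2)])
    show "\<exists>D. ((\<lambda>m. \<psi> (m * z) / \<psi> m) has_real_derivative D) (at m) \<and> D \<le> 0"
      if "l < m" "m < 1" for m
      using psi_quotient_deriv_nonpos[OF z_pos z(2)] that l by auto
    have "continuous_on {l..1} (\<lambda>m. \<psi> (m * z))"
      by (rule continuous_on_compose2[OF cont])
        (use l z in \<open>auto intro!: continuous_intros simp: mult_le_one\<close>)
    moreover have "continuous_on {l..1} \<psi>"
      using l by (intro continuous_on_subset[OF cont]) auto
    moreover have "\<psi> m \<noteq> 0" if "m \<in> {l..1}" for m
      using psi_pos[of m] that l by auto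
    ultimately show "continuous_on {l..1} (\<lambda>m. \<psi> (m * z) / \<psi> m)"
      by (intro continuous_on_divide) auto
  qed
  then show ?thesis using psi_pos[OF l] psi_1 by (simp add: field_simps)
qed

lemma psi_sum_rescale:
  assumes "1 \<le> t" "\<forall>x\<in>set v. \<bar>x\<bar> \<le> 1"
  shows "\<psi> (1 / t) * psi_sum \<psi> v 1 \<le> psi_sum \<psi> v t"
proof -
  have "\<psi> (1 / t) * psi_sum \<psi> v 1 = (\<Sum>x\<leftarrow>v. \<psi> (1 / t) * \<psi> \<bar>x\<bar>)"
    by (simp add: psi_sum_def sum_list_const_mult)
  also have "\<dots> \<le> (\<Sum>x\<leftarrow>v. \<psi> ((1 / t) * \<bar>x\<bar>))"
    using assms by (intro sum_list_mono psi_supermult) auto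
  finally show ?thesis by (simp add: psi_sum_def)
qed

lemma psi_norm_pair_le_append:
  assumes y: "psi_norm \<psi> y = 1"
  shows "psi_norm \<psi> [1, r] \<le> psi_norm \<psi> (y @ [r])"
proof -
  obtain y0 where y0: "y0 \<in> set y" "y0 \<noteq> 0"
    using y by (auto simp: psi_norm_eq_The split: if_splits)
  have y_unit: "is_psi_norm \<psi> y 1"
    using psi_norm_is_psi_norm[OF y0] y by simp
  define t where "t = psi_norm \<psi> (y @ [r])"
  have t: "is_psi_norm \<psi> (y @ [r]) t"
    unfolding t_def using psi_norm_is_psi_norm[of y0 "y @ [r]"] y0 by auto
  then have t_pos: "0 < t" and r_adm: "\<bar>r\<bar> / t \<le> 1"
    and y_adm: "\<forall>x\<in>set y. \<bar>x\<bar> / t \<le> 1"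
    and t_eq: "psi_sum \<psi> y t + \<psi> (\<bar>r\<bar> / t) = 1"
    by (auto simp: is_psi_norm_def psi_sum_append psi_sum_def)
  have "psi_sum \<psi> y t \<le> 1" using t_eq psi_nonneg[of "\<bar>r\<bar> / t"] t_pos r_adm by simp
  then have t_ge_1: "1 \<le> t"
    using psi_norm_le_of_psi_sum_le[OF y0 t_pos y_adm] y by simp
  have "\<psi> (1 / t) \<le> psi_sum \<psi> y t"
    using psi_sum_rescale[OF t_ge_1, of y] y_unit unfolding is_psi_norm_def by auto
  then have "psi_sum \<psi> [1, r] t \<le> 1"
    using t_eq t_pos by (simp add: psi_sum_def)
  then show ?thesis
    using psi_norm_le_of_psi_sum_le[of 1 "[1, r]" t] t_pos t_ge_1 r_adm by (simp flip: t_def)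
qed

end

theorem lemma5p2:
  fixes \<psi> d1 d2 d3 :: "real \<Rightarrow> real" and n :: nat and r :: real
  assumes cont: "continuous_on {0..1} \<psi>"
    and conv: "convex_on {0..1} \<psi>"
    and incr: "strict_mono_on {0..1} \<psi>"
    and surj: "\<psi> ` {0..1} = {0..1}"
    and d1: "\<And>x. x \<in> {0..1} \<Longrightarrow> (\<psi> has_real_derivative d1 x) (at x within {0..1})"
    and d2: "\<And>x. x \<in> {0..1} \<Longrightarrow> (d1 has_real_derivative d2 x) (at x within {0..1})"
    and d3: "\<And>x. x \<in> {0..1} \<Longrightarrow> (d2 has_real_derivative d3 x) (at x within {0..1})"
    and d1_pos: "\<And>x. x \<in> {0<..1} \<Longrightarrow> d1 x > 0"
    and ratio1: "strict_mono_on {0<..1} (\<lambda>x. x * d1 x / \<psi> x)"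
    and ratio2: "strict_mono_on {0<..1} (\<lambda>x. x * d2 x / d1 x)"
    and n: "n \<ge> 2"
    and r: "r \<ge> 0"
  shows "psi_norm \<psi> [1, r] \<in>
           {psi_norm \<psi> (y @ [r]) | y. length y = n - 1 \<and> (\<forall>t\<in>set y. t \<ge> 0) \<and> psi_norm \<psi> y = 1}
       \<and> (\<forall>y. length y = n - 1 \<and> (\<forall>t\<in>set y. t \<ge> 0) \<and> psi_norm \<psi> y = 1
              \<longrightarrow> psi_norm \<psi> [1, r] \<le> psi_norm \<psi> (y @ [r]))"
proof -
  interpret elastic_gauge_function \<psi> d1
    using cont conv incr surj d1 strict_mono_on_imp_mono_on[OF ratio1] by unfold_locales
  define y0 where "y0 = (1::real) # replicate (n - 2) 0"
  have "length y0 = n - 1" "\<forall>t\<in>set y0. t \<ge> 0" "psi_norm \<psi> y0 = 1"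
    using n by (auto simp: y0_def psi_norm_unit_vector)
  moreover have "psi_norm \<psi> (y0 @ [r]) = psi_norm \<psi> [1, r]"
    unfolding y0_def by (simp add: psi_norm_pad_zeros)
  ultimately show ?thesis
    using psi_norm_pair_le_append by force
qed

end
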